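(* Let $(\Omega,\mathcal{F},\mathbb{P})$ be a nonatomic probability space, let $u:\mathbb{R}\to\mathbb{R}\cup\{-\infty\}$ be a utility function bounded from above, let $\alpha\in\mathbb{R}$ be such that $u(x)\ge\alpha$ for some $x\in\mathbb{R}$, and set $\mathcal{A}_u^\infty=\{X\in L^\infty: \mathbb{E}[u(X)]\ge\alpha\}$. Let $S=(S_0,S_T)$ be a traded asset with $S_T\in L^\infty$. (i) Assume $u$ never attains the value $-\infty$ and $u(x)>\alpha$ for some $x\in\mathbb{R}$. Then $\rho_{\mathcal{A}_u^\infty,S}$ is finite-valued (hence continuous) on $L^\infty$ if and only if $\mathbb{P}(S_T=0)=0$. (ii) Assume $u$ attains the value $-\infty$ or $u(x)\le\alpha$ for all $x\in\mathbb{R}$. Then $\rho_{\mathcal{A}_u^\infty,S}$ is finite-valued (hence continuous) on $L^\infty$ if and only if $\mathbb{P}(S_T\ge\varepsilon)=1$ for some $\varepsilon>0$.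
   Context: A utility function is a nonconstant, increasing, concave function $u:\mathbb{R}\to\mathbb{R}\cup\{-\infty\}$ (it is then unbounded from below). A traded asset is $S=(S_0,S_T)$ with $S_0>0$ and $S_T\ge0$ a.s., $S_T\neq0$. For $\mathcal{B}\subset L^\infty$, $\rho_{\mathcal{B},S}(X)=\inf\{m\in\mathbb{R}: X+\frac{m}{S_0}S_T\in\mathcal{B}\}$, $X\in L^\infty$. *)

theory Defs
  imports "HOL-Probability.Probability"
begin

definition nonatomic :: "'a measure \<Rightarrow> bool" where
  "nonatomic M \<longleftrightarrow> (\<forall>A\<in>sets M. measure M A > 0 \<longrightarrow>
      (\<exists>B\<in>sets M. B \<subseteq> A \<and> 0 < measure M B \<and> measure M B < measure M A))"

definition utility_function :: "(real \<Rightarrow> ereal) \<Rightarrow> bool" where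
  "utility_function u \<longleftrightarrow>
     (\<forall>x. u x \<noteq> \<infinity>) \<and> (\<exists>x y. u x \<noteq> u y) \<and> mono u \<and>
     (\<forall>x y t. 0 < t \<and> t < 1 \<longrightarrow>
        ereal t * u x + ereal (1 - t) * u y \<le> u (t * x + (1 - t) * y))"

text \<open>Representatives of L^\<infinity>: measurable, essentially bounded real functions.\<close>
definition Linf :: "'a measure \<Rightarrow> ('a \<Rightarrow> real) set" where
  "Linf M = {X. X \<in> borel_measurable M \<and> (\<exists>C. AE \<omega> in M. \<bar>X \<omega>\<bar> \<le> C)}"

definition ereal_expectation :: "'a measure \<Rightarrow> ('a \<Rightarrow> ereal) \<Rightarrow> ereal" where
  "ereal_expectation M f =
     enn2ereal (\<integral>\<^sup>+ \<omega>. e2ennreal (f \<omega>) \<partial>M) - enn2ereal (\<integral>\<^sup>+ \<omega>. e2ennreal (- f \<omega>) \<partial>M)"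

definition utility_acceptance_set ::
    "'a measure \<Rightarrow> (real \<Rightarrow> ereal) \<Rightarrow> real \<Rightarrow> ('a \<Rightarrow> real) set" where
  "utility_acceptance_set M u \<alpha> =
     {X \<in> Linf M. ereal \<alpha> \<le> ereal_expectation M (\<lambda>\<omega>. u (X \<omega>))}"

definition traded_asset :: "'a measure \<Rightarrow> real \<Rightarrow> ('a \<Rightarrow> real) \<Rightarrow> bool" where
  "traded_asset M S0 ST \<longleftrightarrow> S0 > 0 \<and> ST \<in> borel_measurable M \<and>
     (AE \<omega> in M. ST \<omega> \<ge> 0) \<and> \<not> (AE \<omega> in M. ST \<omega> = 0)"

definition rho :: "('a \<Rightarrow> real) set \<Rightarrow> real \<Rightarrow> ('a \<Rightarrow> real) \<Rightarrow> ('a \<Rightarrow> real) \<Rightarrow> ereal" where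
  "rho B S0 ST X = Inf {ereal m | m. (\<lambda>\<omega>. X \<omega> + m / S0 * ST \<omega>) \<in> B}"

end

theory Submission
  imports Defs
begin

text \<open>Write \<open>X\<^sub>m = X + m/S\<^sub>0 S\<^sub>T\<close>. As \<open>u\<close> is bounded above by some \<open>c\<close> and unbounded below,
  a position that stays below a low enough level on an event of probability \<open>p > 0\<close> has
  expected utility at most \<open>c + (b - c) p < \<alpha>\<close>. Applied to \<open>{S\<^sub>T \<ge> \<delta>}\<close> this bounds the
  acceptable \<open>m\<close> from below, so \<open>\<rho>(X)\<close> is finite iff some \<open>X\<^sub>m\<close> is acceptable. A low
  constant \<open>X\<close> stays low on \<open>{S\<^sub>T = 0}\<close> whatever \<open>m\<close> is; and when \<open>u\<close> takes the value \<open>-\<infinity>\<close>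
  or never exceeds \<open>\<alpha>\<close>, a low constant \<open>X\<^sub>m\<close> stays low on \<open>{m/S\<^sub>0 S\<^sub>T \<le> 1}\<close>, an event of
  positive probability unless \<open>S\<^sub>T \<ge> \<epsilon>\<close> a.s. Conversely, for large \<open>m\<close>, \<open>X\<^sub>m \<ge> x\<^sub>0\<close> with
  \<open>u(x\<^sub>0) \<ge> \<alpha>\<close> wherever \<open>S\<^sub>T \<ge> \<epsilon>\<close>. If only \<open>S\<^sub>T > 0\<close> a.s., but \<open>u\<close> is finite with \<open>u(x\<^sub>1) > \<alpha>\<close>,
  then \<open>X\<^sub>m \<ge> x\<^sub>1\<close> off \<open>{S\<^sub>T \<le> \<delta>}\<close> and \<open>X\<^sub>m \<ge> -\<parallel>X\<parallel>\<^sub>\<infinity>\<close> on it, which suffices once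
  \<open>P(S\<^sub>T \<le> \<delta>)\<close> is small enough.\<close>

lemma nn_integral_ennreal_less_top:
  assumes "integrable M (g :: 'a \<Rightarrow> real)"
  shows "(\<integral>\<^sup>+ x. ennreal (g x) \<partial>M) < \<infinity>"
proof -
  have "(\<integral>\<^sup>+ x. ennreal (g x) \<partial>M) \<le> (\<integral>\<^sup>+ x. ennreal (norm (g x)) \<partial>M)"
    by (intro nn_integral_mono) (simp add: ennreal_leI)
  also have "\<dots> < \<infinity>"
    using assms by (simp add: integrable_iff_bounded)
  finally show ?thesis .
qed

lemma enn2ereal_eq_ereal_enn2real: "(x :: ennreal) < \<infinity> \<Longrightarrow> enn2ereal x = ereal (enn2real x)"
  using enn2ereal_nonneg[of x] unfolding enn2real_def by (cases "enn2ereal x") auto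

lemma ereal_expectation_integrable:
  assumes "integrable M g"
  shows "ereal_expectation M (\<lambda>\<omega>. ereal (g \<omega>)) = ereal (integral\<^sup>L M g)"
proof -
  have neg: "integrable M (\<lambda>x. - g x)"
    using assms by simp
  have e2ennreal_uminus: "\<And>x. e2ennreal (- ereal x) = ennreal (- x)"
    by (metis e2ennreal_ereal uminus_ereal.simps(1))
  show ?thesis
    unfolding ereal_expectation_def real_lebesgue_integral_def[OF assms] e2ennreal_uminus e2ennreal_ereal
    using enn2ereal_eq_ereal_enn2real[OF nn_integral_ennreal_less_top[OF assms]]
      enn2ereal_eq_ereal_enn2real[OF nn_integral_ennreal_less_top[OF neg]]
    by (simp only:) (simp only: ereal_minus(1))
qed

lemma ereal_expectation_mono_AE:
  assumes "AE \<omega> in M. f \<omega> \<le> h \<omega>"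
  shows "ereal_expectation M f \<le> ereal_expectation M h"
  unfolding ereal_expectation_def
proof (rule ereal_minus_mono)
  show "enn2ereal (\<integral>\<^sup>+ \<omega>. e2ennreal (f \<omega>) \<partial>M) \<le> enn2ereal (\<integral>\<^sup>+ \<omega>. e2ennreal (h \<omega>) \<partial>M)"
    "enn2ereal (\<integral>\<^sup>+ \<omega>. e2ennreal (- h \<omega>) \<partial>M) \<le> enn2ereal (\<integral>\<^sup>+ \<omega>. e2ennreal (- f \<omega>) \<partial>M)"
    using assms by (auto simp: less_eq_ennreal.rep_eq[symmetric] elim!: eventually_mono
        intro!: nn_integral_mono_AE e2ennreal_mono)
qed

lemma (in prob_space) ereal_expectation_two_valued:
  assumes "B \<in> events"
  shows "ereal_expectation M (\<lambda>\<omega>. ereal (w + (v - w) * indicator B \<omega>)) = ereal (w + (v - w) * prob B)"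
proof -
  have "integrable M (\<lambda>\<omega>. w + (v - w) * indicator B \<omega>)"
    using assms by (auto simp: less_top[symmetric] prob_space)
  moreover have "integral\<^sup>L M (\<lambda>\<omega>. w + (v - w) * indicator B \<omega>) = w + (v - w) * prob B"
    using assms by (subst Bochner_Integration.integral_add) (auto simp: less_top[symmetric] prob_space)
  ultimately show ?thesis
    by (simp add: ereal_expectation_integrable)
qed

lemma (in prob_space) ereal_expectation_le_two_valued:
  assumes "B \<in> events"
    and "AE \<omega> in M. \<omega> \<in> B \<longrightarrow> f \<omega> \<le> ereal v"
    and "AE \<omega> in M. \<omega> \<notin> B \<longrightarrow> f \<omega> \<le> ereal w"
  shows "ereal_expectation M f \<le> ereal (w + (v - w) * prob B)"
proof -
  have "AE \<omega> in M. f \<omega> \<le> ereal (w + (v - w) * indicator B \<omega>)"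
    using assms(2,3) by eventually_elim (auto simp: indicator_def)
  then show ?thesis
    using ereal_expectation_mono_AE ereal_expectation_two_valued[OF assms(1)] by metis
qed

lemma (in prob_space) ereal_expectation_ge_two_valued:
  assumes "B \<in> events"
    and "AE \<omega> in M. \<omega> \<in> B \<longrightarrow> ereal v \<le> f \<omega>"
    and "AE \<omega> in M. \<omega> \<notin> B \<longrightarrow> ereal w \<le> f \<omega>"
  shows "ereal (w + (v - w) * prob B) \<le> ereal_expectation M f"
proof -
  have "AE \<omega> in M. ereal (w + (v - w) * indicator B \<omega>) \<le> f \<omega>"
    using assms(2,3) by eventually_elim (auto simp: indicator_def)
  then show ?thesis
    using ereal_expectation_mono_AE ereal_expectation_two_valued[OF assms(1)] by metis
qed

lemma (in prob_space) ereal_expectation_ge_AE: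
  assumes "AE \<omega> in M. ereal a \<le> f \<omega>"
  shows "ereal a \<le> ereal_expectation M f"
  using ereal_expectation_ge_two_valued[of "{}" a f a] assms by simp

lemma utility_function_below_secant:
  assumes "utility_function u" "z < x" "x < y" "u x = ereal p" "u y = ereal q"
  shows "u z \<le> ereal (p - (x - z) / (y - x) * (q - p))"
proof (cases "u z")
  case (real r)
  define t where "t = (y - x) / (y - z)"
  have t: "0 < t" "t < 1" "1 - t = (x - z) / (y - z)"
    using assms(2,3) by (auto simp: t_def field_simps)
  have "y - z \<noteq> 0"
    using assms(2,3) by simp
  then have "t * z + (1 - t) * y = x"
    unfolding t_def by (simp add: divide_simps) (simp add: algebra_simps)
  then have "ereal t * u z + ereal (1 - t) * u y \<le> u x"
    using assms(1) t(1,2) unfolding utility_function_def by metis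
  then have chord: "t * r + (1 - t) * q \<le> p"
    using real assms(4,5) by simp
  define k where "k = (x - z) / (y - x)"
  have "k * t = 1 - t"
    unfolding t(3) k_def using assms(2,3) by (simp add: t_def)
  then have "t * (p - k * (q - p)) = p - (1 - t) * q"
    by algebra
  with chord have "t * r \<le> t * (p - k * (q - p))"
    by linarith
  then show ?thesis
    using real t(1) unfolding k_def by simp
next
  case PInf
  then show ?thesis
    using assms(1) unfolding utility_function_def by auto
qed simp

lemma utility_function_unbounded_below:
  assumes "utility_function u"
  shows "\<exists>y. u y \<le> ereal b"
proof -
  obtain x1 y1 where "u x1 \<noteq> u y1" and mono: "mono u"
    using assms unfolding utility_function_def by auto
  then obtain x y where xy: "x < y" "u x < u y"
    unfolding mono_def by (metis linorder_neqE_linordered_idom order_le_less)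
  show ?thesis
  proof (cases "u x")
    case (real p)
    obtain q where q: "u y = ereal q"
      using xy(2) assms unfolding utility_function_def by (cases "u y") auto
    have pq: "p < q"
      using xy(2) real q by simp
    define z where "z = x - (y - x) * (\<bar>p - b\<bar> + 1) / (q - p)"
    have "z < x"
      using xy(1) pq unfolding z_def by (simp add: add_pos_nonneg)
    moreover have "p - (x - z) / (y - x) * (q - p) = p - \<bar>p - b\<bar> - 1"
      using xy(1) pq unfolding z_def by simp
    ultimately have "u z \<le> ereal (p - \<bar>p - b\<bar> - 1)"
      using utility_function_below_secant[OF assms _ xy(1) real q] by metis
    then show ?thesis
      by (intro exI[of _ z]) (simp add: order_trans)
  next
    case MInf
    then show ?thesis
      by (intro exI[of _ x]) simp
  qed (use assms in \<open>auto simp: utility_function_def\<close>)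
qed

lemma ex_two_valued_mean_less:
  fixes c \<alpha> p :: real
  assumes "p > 0"
  shows "\<exists>b. c + (b - c) * p < \<alpha>"
proof
  show "c + ((\<alpha> - 1 - (1 - p) * c) / p - c) * p < \<alpha>"
    using assms by (simp add: field_simps)
qed

lemma Linf_const: "(\<lambda>\<omega>. c) \<in> Linf M"
  unfolding Linf_def by (auto intro!: exI[of _ "\<bar>c\<bar>"])

lemma Linf_add_scaled:
  assumes "X \<in> Linf M" "Y \<in> Linf M"
  shows "(\<lambda>\<omega>. X \<omega> + k * Y \<omega>) \<in> Linf M"
proof -
  obtain C1 C2 where "AE \<omega> in M. \<bar>X \<omega>\<bar> \<le> C1" "AE \<omega> in M. \<bar>Y \<omega>\<bar> \<le> C2"
    using assms unfolding Linf_def by auto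
  then have "AE \<omega> in M. \<bar>X \<omega> + k * Y \<omega>\<bar> \<le> C1 + \<bar>k\<bar> * C2"
  proof eventually_elim
    case (elim \<omega>)
    have "\<bar>X \<omega> + k * Y \<omega>\<bar> \<le> \<bar>X \<omega>\<bar> + \<bar>k\<bar> * \<bar>Y \<omega>\<bar>"
      by (metis abs_mult abs_triangle_ineq)
    also have "\<dots> \<le> C1 + \<bar>k\<bar> * C2"
      using elim by (intro add_mono mult_left_mono) auto
    finally show ?case .
  qed
  then show ?thesis
    using assms unfolding Linf_def by auto
qed

lemma abs_Inf_ereal_neq_infinity_iff:
  assumes "\<And>m. P m \<Longrightarrow> L \<le> m"
  shows "\<bar>Inf {ereal m | m. P m}\<bar> \<noteq> \<infinity> \<longleftrightarrow> (\<exists>m. P m)"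
proof
  assume "\<bar>Inf {ereal m | m. P m}\<bar> \<noteq> \<infinity>"
  then have "{ereal m | m. P m} \<noteq> {}"
    by (metis Inf_empty abs_ereal.simps(3) top_ereal_def)
  then show "\<exists>m. P m"
    by blast
next
  assume "\<exists>m. P m"
  then obtain m0 where "P m0" ..
  then have "Inf {ereal m | m. P m} \<le> ereal m0"
    by (intro Inf_lower) auto
  moreover have "ereal L \<le> Inf {ereal m | m. P m}"
    using assms by (intro Inf_greatest) auto
  ultimately show "\<bar>Inf {ereal m | m. P m}\<bar> \<noteq> \<infinity>"
    by auto
qed

lemma le_add_scaled_if_bounded_away:
  fixes x C \<delta> s X :: real
  assumes "\<bar>X\<bar> \<le> C" "0 < \<delta>" "\<delta> \<le> s"
  shows "x \<le> X + max 0 ((x + C) / \<delta>) * s"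
proof -
  have "(x + C) / \<delta> * \<delta> \<le> max 0 ((x + C) / \<delta>) * s"
    using assms by (intro mult_mono) auto
  then show ?thesis
    using assms by simp
qed

lemma two_valued_mean_ge:
  fixes w v \<alpha> p :: real
  assumes "\<alpha> < w" "0 \<le> p" "p < (w - \<alpha>) / (\<bar>w - v\<bar> + 1)"
  shows "\<alpha> \<le> w + (v - w) * p"
proof (cases "w \<le> v")
  case True
  then show ?thesis
    using assms(1,2) by (smt (verit) mult_nonneg_nonneg)
next
  case False
  then have "(w - v) * p \<le> (w - v) * ((w - \<alpha>) / (\<bar>w - v\<bar> + 1))"
    using assms(3) by (intro mult_left_mono) auto
  also have "\<dots> = (w - \<alpha>) * ((w - v) / (\<bar>w - v\<bar> + 1))"
    by simp
  also have "\<dots> \<le> w - \<alpha>"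
    using assms(1) False by (intro mult_left_le) auto
  finally show ?thesis
    by (simp add: algebra_simps)
qed

locale utility_market = prob_space M
  for M :: "'a measure" and u :: "real \<Rightarrow> ereal" and \<alpha> S0 :: real and ST :: "'a \<Rightarrow> real" +
  assumes utility: "utility_function u"
    and asset: "traded_asset M S0 ST"
begin

definition acceptable :: "('a \<Rightarrow> real) \<Rightarrow> real \<Rightarrow> bool" where
  "acceptable X m \<longleftrightarrow> ereal \<alpha> \<le> ereal_expectation M (\<lambda>\<omega>. u (X \<omega> + m / S0 * ST \<omega>))"

lemma S0_pos: "S0 > 0"
  and ST_measurable [measurable]: "ST \<in> borel_measurable M"
  and ST_nonneg_AE: "AE \<omega> in M. 0 \<le> ST \<omega>"
  and ST_not_null: "\<not> (AE \<omega> in M. ST \<omega> = 0)"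
  using asset unfolding traded_asset_def by auto

lemma mono_u: "mono u"
  using utility unfolding utility_function_def by auto

lemma u_neq_infinity: "u x \<noteq> \<infinity>"
  using utility unfolding utility_function_def by auto

lemma ex_pos_prob_ST_ge: "\<exists>\<delta>>0. 0 < prob {\<omega>\<in>space M. \<delta> \<le> ST \<omega>}"
proof (rule ccontr)
  assume "\<not> ?thesis"
  then have "prob {\<omega>\<in>space M. 1 / Suc n \<le> ST \<omega>} = 0" for n :: nat
    using measure_nonneg[of M] by (metis of_nat_0_less_iff zero_less_Suc zero_less_divide_1_iff order_less_le)
  then have "AE \<omega> in M. \<not> 1 / Suc n \<le> ST \<omega>" for n :: nat
    by (subst prob_Collect_eq_0[symmetric]) auto
  then have "AE \<omega> in M. \<forall>n::nat. ST \<omega> < 1 / Suc n"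
    by (simp add: AE_all_countable not_le)
  then have "AE \<omega> in M. ST \<omega> = 0"
    using ST_nonneg_AE
  proof eventually_elim
    case (elim \<omega>)
    show ?case
    proof (rule ccontr)
      assume "ST \<omega> \<noteq> 0"
      then obtain n :: nat where "1 / Suc n < ST \<omega>"
        using elim(2) reals_Archimedean[of "ST \<omega>"] by (auto simp: inverse_eq_divide)
      then show False
        using elim(1) by (meson less_asym)
    qed
  qed
  then show False
    using ST_not_null by simp
qed

lemma ex_small_prob_ST_le:
  assumes "prob {\<omega>\<in>space M. ST \<omega> = 0} = 0" "q > 0"
  shows "\<exists>\<delta>>0. prob {\<omega>\<in>space M. ST \<omega> \<le> \<delta>} < q"
proof -
  define B where "B n = {\<omega>\<in>space M. ST \<omega> \<le> 1 / Suc n}" for n :: nat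
  have "1 / real (Suc (Suc n)) \<le> 1 / Suc n" for n
    by (intro divide_left_mono) auto
  then have "decseq B"
    unfolding B_def by (intro decseq_SucI) (auto intro: order_trans)
  then have lim: "(\<lambda>n. prob (B n)) \<longlonglongrightarrow> prob (\<Inter>n. B n)"
    by (rule finite_Lim_measure_decseq[rotated]) (auto simp: B_def)
  have "(\<Inter>n. B n) \<subseteq> {\<omega>\<in>space M. ST \<omega> < 0} \<union> {\<omega>\<in>space M. ST \<omega> = 0}"
  proof
    fix \<omega> assume "\<omega> \<in> (\<Inter>n. B n)"
    then have "\<omega> \<in> space M" "\<And>n::nat. ST \<omega> \<le> 1 / Suc n"
      unfolding B_def by auto
    moreover have "ST \<omega> \<le> 0"
      using calculation(2) reals_Archimedean[of "ST \<omega>"]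
      by (metis inverse_eq_divide not_le)
    ultimately show "\<omega> \<in> {\<omega>\<in>space M. ST \<omega> < 0} \<union> {\<omega>\<in>space M. ST \<omega> = 0}"
      by auto
  qed
  then have "prob (\<Inter>n. B n) \<le> prob ({\<omega>\<in>space M. ST \<omega> < 0} \<union> {\<omega>\<in>space M. ST \<omega> = 0})"
    by (intro finite_measure_mono) auto
  also have "\<dots> \<le> prob {\<omega>\<in>space M. ST \<omega> < 0} + prob {\<omega>\<in>space M. ST \<omega> = 0}"
    by (intro measure_Un_le) auto
  also have "prob {\<omega>\<in>space M. ST \<omega> < 0} = 0"
    using ST_nonneg_AE by (subst prob_Collect_eq_0) (auto elim: eventually_mono)
  finally have "prob (\<Inter>n. B n) < q"
    using assms by simp
  then obtain n where "prob (B n) < q"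
    using order_tendstoD(2)[OF lim] eventually_sequentially by (metis order_refl)
  then show ?thesis
    unfolding B_def by (intro exI[of _ "1 / Suc n"]) auto
qed

lemma not_acceptable_if_low_on:
  assumes "\<forall>x. u x \<le> ereal c" "B \<in> events"
    and "AE \<omega> in M. \<omega> \<in> B \<longrightarrow> X \<omega> + m / S0 * ST \<omega> \<le> y" "u y \<le> ereal b"
    and "c + (b - c) * prob B < \<alpha>"
  shows "\<not> acceptable X m"
proof -
  have "AE \<omega> in M. \<omega> \<in> B \<longrightarrow> u (X \<omega> + m / S0 * ST \<omega>) \<le> ereal b"
    using assms(3) by eventually_elim (metis assms(4) mono_u monoD order_trans)
  then have "ereal_expectation M (\<lambda>\<omega>. u (X \<omega> + m / S0 * ST \<omega>)) \<le> ereal (c + (b - c) * prob B)"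
    using assms(1,2) by (intro ereal_expectation_le_two_valued) auto
  also have "\<dots> < ereal \<alpha>"
    using assms(5) by simp
  finally show ?thesis
    unfolding acceptable_def by simp
qed

lemma acceptable_bounded_below:
  assumes "\<forall>x. u x \<le> ereal c" "X \<in> Linf M"
  shows "\<exists>L. \<forall>m. acceptable X m \<longrightarrow> L \<le> m"
proof -
  obtain \<delta> where \<delta>: "\<delta> > 0" "0 < prob {\<omega>\<in>space M. \<delta> \<le> ST \<omega>}"
    using ex_pos_prob_ST_ge by blast
  obtain b where b: "c + (b - c) * prob {\<omega>\<in>space M. \<delta> \<le> ST \<omega>} < \<alpha>"
    using ex_two_valued_mean_less[OF \<delta>(2)] by blast
  obtain y where y: "u y \<le> ereal b"
    using utility_function_unbounded_below[OF utility] by blast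
  obtain C where C: "AE \<omega> in M. \<bar>X \<omega>\<bar> \<le> C"
    using assms(2) unfolding Linf_def by auto
  have "min 0 ((y - C) * S0 / \<delta>) \<le> m" if "acceptable X m" for m
  proof (rule ccontr)
    assume "\<not> min 0 ((y - C) * S0 / \<delta>) \<le> m"
    then have "m < 0" "m < (y - C) * S0 / \<delta>"
      by auto
    then have "m < 0" "m * \<delta> < (y - C) * S0"
      using \<delta>(1) by (auto simp: pos_less_divide_eq)
    then have m: "m / S0 \<le> 0" "m / S0 * \<delta> < y - C"
      using S0_pos by (auto simp: divide_nonpos_pos pos_divide_less_eq)
    have "AE \<omega> in M. \<omega> \<in> {\<omega>\<in>space M. \<delta> \<le> ST \<omega>} \<longrightarrow> X \<omega> + m / S0 * ST \<omega> \<le> y"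
      using C
    proof eventually_elim
      case (elim \<omega>)
      show ?case
      proof
        assume "\<omega> \<in> {\<omega>\<in>space M. \<delta> \<le> ST \<omega>}"
        then have "m / S0 * ST \<omega> \<le> m / S0 * \<delta>"
          using m(1) by (intro mult_left_mono_neg) auto
        then show "X \<omega> + m / S0 * ST \<omega> \<le> y"
          using elim m(2) by linarith
      qed
    qed
    then show False
      using not_acceptable_if_low_on[OF assms(1) _ _ y b] that by simp
  qed
  then show ?thesis
    by blast
qed

lemma rho_finite_iff_acceptable:
  assumes "\<forall>x. u x \<le> ereal c" "ST \<in> Linf M" "X \<in> Linf M"
  shows "\<bar>rho (utility_acceptance_set M u \<alpha>) S0 ST X\<bar> \<noteq> \<infinity> \<longleftrightarrow> (\<exists>m. acceptable X m)"
proof -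
  have mem: "(\<lambda>\<omega>. X \<omega> + m / S0 * ST \<omega>) \<in> utility_acceptance_set M u \<alpha> \<longleftrightarrow> acceptable X m" for m
    using Linf_add_scaled[OF assms(3,2), of "m / S0"]
    unfolding utility_acceptance_set_def acceptable_def by simp
  obtain L where "\<And>m. acceptable X m \<Longrightarrow> L \<le> m"
    using acceptable_bounded_below[OF assms(1,3)] by blast
  then show ?thesis
    unfolding rho_def mem by (rule abs_Inf_ereal_neq_infinity_iff)
qed

lemma acceptable_S0_mult:
  "acceptable X (S0 * k) \<longleftrightarrow> ereal \<alpha> \<le> ereal_expectation M (\<lambda>\<omega>. u (X \<omega> + k * ST \<omega>))"
  using S0_pos unfolding acceptable_def by simp

lemma zero_set_null_if_all_acceptable:
  assumes "\<forall>x. u x \<le> ereal c" "\<forall>X\<in>Linf M. \<exists>m. acceptable X m"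
  shows "prob {\<omega>\<in>space M. ST \<omega> = 0} = 0"
proof (rule ccontr)
  let ?Z = "{\<omega>\<in>space M. ST \<omega> = 0}"
  assume "prob ?Z \<noteq> 0"
  then have "0 < prob ?Z"
    using measure_nonneg[of M ?Z] by linarith
  then obtain b where b: "c + (b - c) * prob ?Z < \<alpha>"
    using ex_two_valued_mean_less by blast
  obtain y where y: "u y \<le> ereal b"
    using utility_function_unbounded_below[OF utility] by blast
  obtain m where "acceptable (\<lambda>_. y) m"
    using assms(2) Linf_const by blast
  then show False
    using not_acceptable_if_low_on[OF assms(1) _ _ y b] by simp
qed

lemma all_acceptable_if_zero_set_null:
  assumes "\<forall>x. u x \<noteq> -\<infinity>" "ereal \<alpha> < u x1"
    and "prob {\<omega>\<in>space M. ST \<omega> = 0} = 0" "X \<in> Linf M"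
  shows "\<exists>m. acceptable X m"
proof -
  obtain C where C: "AE \<omega> in M. \<bar>X \<omega>\<bar> \<le> C"
    using assms(4) unfolding Linf_def by auto
  obtain v w where v: "u (-C) = ereal v" and w: "u x1 = ereal w"
    using assms(1) u_neq_infinity by (metis ereal_cases)
  have "\<alpha> < w"
    using assms(2) w by simp
  then have "0 < (w - \<alpha>) / (\<bar>w - v\<bar> + 1)"
    by (intro divide_pos_pos) auto
  then obtain \<delta> where \<delta>: "\<delta> > 0" "prob {\<omega>\<in>space M. ST \<omega> \<le> \<delta>} < (w - \<alpha>) / (\<bar>w - v\<bar> + 1)"
    using ex_small_prob_ST_le[OF assms(3)] by blast
  define k where "k = max 0 ((x1 + C) / \<delta>)"
  have "ereal (w + (v - w) * prob {\<omega>\<in>space M. ST \<omega> \<le> \<delta>}) \<le>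
      ereal_expectation M (\<lambda>\<omega>. u (X \<omega> + k * ST \<omega>))"
  proof (rule ereal_expectation_ge_two_valued)
    show "AE \<omega> in M. \<omega> \<in> {\<omega>\<in>space M. ST \<omega> \<le> \<delta>} \<longrightarrow> ereal v \<le> u (X \<omega> + k * ST \<omega>)"
      using C ST_nonneg_AE
    proof eventually_elim
      case (elim \<omega>)
      have "-C \<le> X \<omega> + k * ST \<omega>"
        using elim by (simp add: k_def abs_le_iff add_increasing2)
      then show ?case
        using v mono_u by (metis monoD)
    qed
    show "AE \<omega> in M. \<omega> \<notin> {\<omega>\<in>space M. ST \<omega> \<le> \<delta>} \<longrightarrow> ereal w \<le> u (X \<omega> + k * ST \<omega>)"
      using C AE_space
    proof eventually_elim
      case (elim \<omega>)
      show ?case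
      proof
        assume "\<omega> \<notin> {\<omega>\<in>space M. ST \<omega> \<le> \<delta>}"
        then have "x1 \<le> X \<omega> + k * ST \<omega>"
          unfolding k_def using elim \<delta>(1) by (intro le_add_scaled_if_bounded_away) auto
        then show "ereal w \<le> u (X \<omega> + k * ST \<omega>)"
          using w mono_u by (metis monoD)
      qed
    qed
  qed simp
  moreover have "\<alpha> \<le> w + (v - w) * prob {\<omega>\<in>space M. ST \<omega> \<le> \<delta>}"
    using \<open>\<alpha> < w\<close> \<delta>(2) by (intro two_valued_mean_ge) auto
  ultimately show ?thesis
    using acceptable_S0_mult by (meson ereal_less_eq(3) order_trans)
qed

lemma all_acceptable_if_bounded_away:
  assumes "ereal \<alpha> \<le> u x0" "\<epsilon> > 0" "prob {\<omega>\<in>space M. \<epsilon> \<le> ST \<omega>} = 1" "X \<in> Linf M"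
  shows "\<exists>m. acceptable X m"
proof -
  obtain C where "AE \<omega> in M. \<bar>X \<omega>\<bar> \<le> C"
    using assms(4) unfolding Linf_def by auto
  moreover have "AE \<omega> in M. \<epsilon> \<le> ST \<omega>"
    using AE_prob_1[OF assms(3)] by auto
  ultimately have "AE \<omega> in M. ereal \<alpha> \<le> u (X \<omega> + max 0 ((x0 + C) / \<epsilon>) * ST \<omega>)"
  proof eventually_elim
    case (elim \<omega>)
    then have "x0 \<le> X \<omega> + max 0 ((x0 + C) / \<epsilon>) * ST \<omega>"
      using assms(2) by (intro le_add_scaled_if_bounded_away) auto
    then have "u x0 \<le> u (X \<omega> + max 0 ((x0 + C) / \<epsilon>) * ST \<omega>)"
      by (rule monoD[OF mono_u])
    then show ?case
      using assms(1) by (rule order_trans[rotated])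
  qed
  then have "acceptable X (S0 * max 0 ((x0 + C) / \<epsilon>))"
    unfolding acceptable_S0_mult by (rule ereal_expectation_ge_AE)
  then show ?thesis ..
qed

lemma positive_prob_scaled_le_one:
  assumes "\<not> (\<exists>\<epsilon>>0. prob {\<omega>\<in>space M. \<epsilon> \<le> ST \<omega>} = 1)"
  shows "0 < prob {\<omega>\<in>space M. k * ST \<omega> \<le> 1}"
proof (cases "k \<le> 0")
  case True
  have "AE \<omega> in M. \<omega> \<in> {\<omega>\<in>space M. k * ST \<omega> \<le> 1}"
    using ST_nonneg_AE AE_space
  proof eventually_elim
    case (elim \<omega>)
    then have "k * ST \<omega> \<le> 0"
      using True by (intro mult_nonpos_nonneg) auto
    then show ?case
      using elim by simp
  qed
  then show ?thesis
    by (subst (asm) AE_in_set_eq_1) auto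
next
  case False
  let ?E = "{\<omega>\<in>space M. 1 / k \<le> ST \<omega>}"
  have "prob ?E \<noteq> 1"
    using assms False by simp
  then have "prob ?E < 1"
    using prob_le_1[of ?E] by linarith
  then have "0 < prob (space M - ?E)"
    by (subst prob_compl) auto
  also have "\<dots> \<le> prob {\<omega>\<in>space M. k * ST \<omega> \<le> 1}"
  proof (intro finite_measure_mono subsetI)
    fix \<omega> assume "\<omega> \<in> space M - ?E"
    then have "\<omega> \<in> space M" "ST \<omega> * k < 1"
      using False by (auto simp: pos_less_divide_eq not_le)
    then show "\<omega> \<in> {\<omega>\<in>space M. k * ST \<omega> \<le> 1}"
      by (simp add: mult.commute)
  qed auto
  finally show ?thesis .
qed

lemma bounded_away_if_all_acceptable:
  assumes "\<forall>x. u x \<le> ereal c" "(\<exists>x. u x = -\<infinity>) \<or> (\<forall>x. u x \<le> ereal \<alpha>)"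
    and "\<forall>X\<in>Linf M. \<exists>m. acceptable X m"
  shows "\<exists>\<epsilon>>0. prob {\<omega>\<in>space M. \<epsilon> \<le> ST \<omega>} = 1"
proof (rule ccontr)
  assume not_bounded_away: "\<not> ?thesis"
  \<comment> \<open>The low point \<open>a\<close> must not depend on the event, which is only fixed once \<open>m\<close> is.\<close>
  obtain a c' where c': "\<forall>x. u x \<le> ereal c'"
    and a: "\<And>p. p > 0 \<Longrightarrow> \<exists>b. u a \<le> ereal b \<and> c' + (b - c') * p < \<alpha>"
  proof (cases "\<exists>x. u x = -\<infinity>")
    case True
    then obtain a where "u a = -\<infinity>" ..
    show ?thesis
    proof (rule that[of c a])
      fix p :: real assume "p > 0"
      then obtain b where "c + (b - c) * p < \<alpha>"
        using ex_two_valued_mean_less by blast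
      with \<open>u a = -\<infinity>\<close> show "\<exists>b. u a \<le> ereal b \<and> c + (b - c) * p < \<alpha>"
        by auto
    qed (use assms(1) in blast)
  next
    case False
    obtain a where "u a \<le> ereal (\<alpha> - 1)"
      using utility_function_unbounded_below[OF utility] by blast
    show ?thesis
    proof (rule that[of \<alpha> a])
      fix p :: real assume "p > 0"
      with \<open>u a \<le> ereal (\<alpha> - 1)\<close> show "\<exists>b. u a \<le> ereal b \<and> \<alpha> + (b - \<alpha>) * p < \<alpha>"
        by (intro exI[of _ "\<alpha> - 1"]) simp
    qed (use False assms(2) in blast)
  qed
  obtain m where acc: "acceptable (\<lambda>_. a - 1) m"
    using assms(3) Linf_const by blast
  let ?B = "{\<omega>\<in>space M. m / S0 * ST \<omega> \<le> 1}"
  obtain b where b: "u a \<le> ereal b" "c' + (b - c') * prob ?B < \<alpha>"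
    using a positive_prob_scaled_le_one[OF not_bounded_away] by blast
  then show False
    using not_acceptable_if_low_on[OF c' _ _ b] acc by simp
qed

end

theorem proposition6p1:
  fixes M :: "'a measure" and u :: "real \<Rightarrow> ereal" and \<alpha> S0 :: real
    and ST :: "'a \<Rightarrow> real"
  assumes "prob_space M" and "nonatomic M"
    and "utility_function u"
    and "\<exists>c::real. \<forall>x. u x \<le> ereal c"
    and "\<exists>x. ereal \<alpha> \<le> u x"
    and "traded_asset M S0 ST" and "ST \<in> Linf M"
  shows "((\<forall>x. u x \<noteq> -\<infinity>) \<and> (\<exists>x. ereal \<alpha> < u x) \<longrightarrow>
            ((\<forall>X\<in>Linf M. \<bar>rho (utility_acceptance_set M u \<alpha>) S0 ST X\<bar> \<noteq> \<infinity>)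
              \<longleftrightarrow> measure M {\<omega>\<in>space M. ST \<omega> = 0} = 0))
       \<and> ((\<exists>x. u x = -\<infinity>) \<or> (\<forall>x. u x \<le> ereal \<alpha>) \<longrightarrow>
            ((\<forall>X\<in>Linf M. \<bar>rho (utility_acceptance_set M u \<alpha>) S0 ST X\<bar> \<noteq> \<infinity>)
              \<longleftrightarrow> (\<exists>\<epsilon>>0. measure M {\<omega>\<in>space M. ST \<omega> \<ge> \<epsilon>} = 1)))"
proof -
  interpret utility_market M u \<alpha> S0 ST
    using assms(1,3,6) by (simp add: utility_market_def utility_market_axioms_def)
  obtain c where c: "\<forall>x. u x \<le> ereal c"
    using assms(4) by blast
  have rho_finite: "(\<forall>X\<in>Linf M. \<bar>rho (utility_acceptance_set M u \<alpha>) S0 ST X\<bar> \<noteq> \<infinity>) \<longleftrightarrow>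
      (\<forall>X\<in>Linf M. \<exists>m. acceptable X m)"
    using rho_finite_iff_acceptable[OF c assms(7)] by (rule ball_cong[OF refl])
  show ?thesis
    unfolding rho_finite
    using zero_set_null_if_all_acceptable[OF c] all_acceptable_if_zero_set_null
      bounded_away_if_all_acceptable[OF c] all_acceptable_if_bounded_away
      assms(5) by blast
qed

end
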